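(* Let $q$ be a prime power, $s,\ell$ positive integers, $\alpha,\beta\in\{1,-1\}\subseteq\mathbb{F}_q$, $r$ the multiplicative order of $\beta$, and assume $q\equiv 1\pmod{r\ell}$. Let $\omega\in\mathbb{F}_q$ be a primitive $r\ell$-th root of unity with $\omega^\ell=\beta$, and $\eta_k(y)=\prod_{j\ne k,\,0\le j\le \ell-1}\frac{y-\omega^{1+jr}}{\omega^{1+kr}-\omega^{1+jr}}$ for $0\le k\le\ell-1$. Let $\mathcal{C}$ be an ideal of $\mathcal{R}=\mathbb{F}_q[x,y]/\langle x^s-\alpha,y^\ell-\beta\rangle$; for each $j$ let $p_j(x)$ be the monic divisor of $x^s-\alpha$ generating $I_j=\{f(x)\in\mathbb{F}_q[x]/\langle x^s-\alpha\rangle:\eta_j(y)f(x)\in\mathcal{C}\}$, $a_j=\deg p_j(x)$, and $p_j'(x)=(x^s-\alpha)/p_j(x)$. Then $\mathcal{C}$ is self-dual if and only if (i) $s\ell=2(a_0+a_1+\cdots+a_{\ell-1})$, and (ii) for every $k$, $0\le k\le \ell-1$, there exist nonzero polynomials $t_k(x),t_k'(x)\in\mathbb{F}_q[x]/\langle x^s-\alpha\rangle$ such that, in $\mathbb{F}_q[x]/\langle x^s-\alpha\rangle$, if $\beta=1$: $p_k'^*(x)=t_k(x)p_{\ell-2-k}(x)$ and $p_k(x)=t_k'(x)p'^*_{\ell-2-k}(x)$; if $\beta=-1$: $p_k'^*(x)=t_k(x)p_{\ell-1-k}(x)$ and $p_k(x)=t_k'(x)p'^*_{\ell-1-k}(x)$;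 where subscripts are read modulo $\ell$.
   Context: Elements of $\mathcal{R}$ are identified with vectors $(c_{i,j})$ of length $s\ell$ via the coefficients of $x^iy^j$ ($0\le i\le s-1$, $0\le j\le \ell-1$); ideals of $\mathcal{R}$ are two-dimensional $(\alpha,\beta)$-constacyclic codes. $\mathcal{C}^\perp$ denotes the Euclidean dual, and $\mathcal{C}$ is self-dual if $\mathcal{C}=\mathcal{C}^\perp$. For a nonzero polynomial $f$ of degree $k$, $f^*(x)=x^kf(1/x)$. *)

theory Defs
  imports "HOL-Computational_Algebra.Polynomial"
begin

text \<open>Elements of R = F_q[x,y]/(x^s - alpha, y^l - beta) are coefficient arrays
  c i j (coefficient of x^i y^j), zero outside 0 <= i < s, 0 <= j < l.\<close>

definition Rsp :: "nat \<Rightarrow> nat \<Rightarrow> (nat \<Rightarrow> nat \<Rightarrow> 'a::zero) set" where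
  "Rsp s l = {c. \<forall>i j. (s \<le> i \<or> l \<le> j) \<longrightarrow> c i j = 0}"

text \<open>Multiplication in R: x^s = alpha, y^l = beta.\<close>
definition rmul :: "nat \<Rightarrow> nat \<Rightarrow> 'a::comm_ring_1 \<Rightarrow> 'a \<Rightarrow>
    (nat \<Rightarrow> nat \<Rightarrow> 'a) \<Rightarrow> (nat \<Rightarrow> nat \<Rightarrow> 'a) \<Rightarrow> (nat \<Rightarrow> nat \<Rightarrow> 'a)" where
  "rmul s l \<alpha> \<beta> c d = (\<lambda>i j. if i < s \<and> j < l then
     (\<Sum>i1<s. \<Sum>j1<l. \<Sum>i2<s. \<Sum>j2<l.
        (if (i1 + i2) mod s = i \<and> (j1 + j2) mod l = j
         then \<alpha> ^ ((i1 + i2) div s) * \<beta> ^ ((j1 + j2) div l) * c i1 j1 * d i2 j2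
         else 0))
     else 0)"

definition R_ideal :: "nat \<Rightarrow> nat \<Rightarrow> 'a::comm_ring_1 \<Rightarrow> 'a \<Rightarrow> (nat \<Rightarrow> nat \<Rightarrow> 'a) set \<Rightarrow> bool" where
  "R_ideal s l \<alpha> \<beta> C \<longleftrightarrow> C \<subseteq> Rsp s l \<and> (\<lambda>i j. 0) \<in> C
     \<and> (\<forall>c\<in>C. \<forall>d\<in>C. (\<lambda>i j. c i j + d i j) \<in> C)
     \<and> (\<forall>c\<in>C. (\<lambda>i j. - c i j) \<in> C)
     \<and> (\<forall>c\<in>C. \<forall>a\<in>Rsp s l. rmul s l \<alpha> \<beta> a c \<in> C)"

definition R_dual :: "nat \<Rightarrow> nat \<Rightarrow> (nat \<Rightarrow> nat \<Rightarrow> 'a::comm_ring_1) set \<Rightarrow> (nat \<Rightarrow> nat \<Rightarrow> 'a) set" where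
  "R_dual s l C = {v \<in> Rsp s l. \<forall>c\<in>C. (\<Sum>i<s. \<Sum>j<l. c i j * v i j) = 0}"

definition self_dual :: "nat \<Rightarrow> nat \<Rightarrow> (nat \<Rightarrow> nat \<Rightarrow> 'a::comm_ring_1) set \<Rightarrow> bool" where
  "self_dual s l C \<longleftrightarrow> C = R_dual s l C"

text \<open>The element g(y) f(x) of R, for deg f < s and deg g < l.\<close>
definition prodR :: "nat \<Rightarrow> nat \<Rightarrow> 'a::comm_ring_1 poly \<Rightarrow> 'a poly \<Rightarrow> (nat \<Rightarrow> nat \<Rightarrow> 'a)" where
  "prodR s l f g = (\<lambda>i j. if i < s \<and> j < l then coeff f i * coeff g j else 0)"

definition eta :: "'a::field \<Rightarrow> nat \<Rightarrow> nat \<Rightarrow> nat \<Rightarrow> 'a poly" where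
  "eta \<omega> r l k = (\<Prod>j\<in>{0..<l} - {k}.
      smult (inverse (\<omega> ^ (1 + k * r) - \<omega> ^ (1 + j * r))) [:- (\<omega> ^ (1 + j * r)), 1:])"

definition xpoly :: "nat \<Rightarrow> 'a::comm_ring_1 \<Rightarrow> 'a poly" where
  "xpoly s \<alpha> = monom 1 s - [:\<alpha>:]"

text \<open>I_j = { f in F_q[x]/(x^s - alpha) : eta_j(y) f(x) in C }, with F_q[x]/(x^s-alpha)
  represented by polynomials of degree < s.\<close>
definition Iset :: "nat \<Rightarrow> nat \<Rightarrow> 'a::field \<Rightarrow> nat \<Rightarrow> (nat \<Rightarrow> nat \<Rightarrow> 'a) set \<Rightarrow> nat \<Rightarrow> 'a poly set" where
  "Iset s l \<omega> r C j = {f. degree f < s \<and> prodR s l f (eta \<omega> r l j) \<in> C}"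

end

theory Submission
  imports Defs
begin

text \<open>
  The \<open>\<theta>\<^sub>k = \<omega>\<^bsup>1+kr\<^esup>\<close>, \<open>k < l\<close>, are \<open>l\<close> distinct roots of \<open>y\<^sup>l - \<beta>\<close> and \<open>\<eta>\<^sub>k\<close> is the
  Lagrange basis polynomial at \<open>\<theta>\<^sub>k\<close>, so substituting \<open>y = \<theta>\<^sub>k\<close> splits \<open>R\<close> into \<open>l\<close> copies
  of \<open>F[x]/(x\<^sup>s - \<alpha>)\<close> (Chinese remainder theorem) and turns \<open>C\<close> into the family of ideals
  \<open>\<langle>p\<^sub>k\<rangle>\<close>. Explicitly \<open>\<eta>\<^sub>k(y) = l\<^sup>-\<^sup>1 \<Sum>\<^sub>j \<theta>\<^sub>k\<^sup>-\<^sup>j y\<^sup>j\<close>, so the Euclidean pairing of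
  \<open>\<eta>\<^sub>k(y) f(x)\<close> with \<open>v\<close> is \<open>l\<^sup>-\<^sup>1\<close> times the coefficient pairing of \<open>f\<close> with
  \<open>v(x, \<theta>\<^sub>k\<^sup>-\<^sup>1)\<close>; and \<open>\<theta>\<^sub>k\<^sup>-\<^sup>1 = \<theta>\<^bsub>\<sigma>(k)\<^esub>\<close> for the involution \<open>\<sigma>(k) = l - 2 - k\<close>
  (if \<open>\<beta> = 1\<close>) resp. \<open>l - 1 - k\<close> (if \<open>\<beta> = -1\<close>) modulo \<open>l\<close>. Hence the components of \<open>C\<^sup>\<bottom>\<close>
  are the orthogonal complements of the \<open>\<langle>p\<^bsub>\<sigma>(k)\<^esub>\<rangle>\<close>. In \<open>F[x]/(x\<^sup>s - \<alpha>)\<close> the pairing of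
  \<open>f\<close> and \<open>w\<close> is the coefficient of \<open>x\<^sup>s\<^sup>-\<^sup>1\<close> in \<open>f(x) x\<^sup>s\<^sup>-\<^sup>1 w(1/x)\<close> reduced modulo
  \<open>x\<^sup>s - \<alpha>\<close>; as \<open>\<alpha> = \<plusminus>1\<close>, this identifies the orthogonal complement of \<open>\<langle>p\<rangle>\<close> with
  \<open>\<langle>p'\<^sup>*\<rangle>\<close>. So \<open>C\<close> is self-dual iff \<open>p\<^sub>k\<close> and \<open>p'\<^sup>*\<^bsub>\<sigma>(k)\<^esub>\<close> are associates for every
  \<open>k\<close>, which is what (i) and (ii) express.
\<close>

section \<open>Arithmetic modulo \<open>x\<^sup>s - \<alpha>\<close>\<close>

lemma sum_mod_poly: "(\<Sum>i\<in>A. f i) mod (z :: 'a::field poly) = (\<Sum>i\<in>A. f i mod z)"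
  by (induction A rule: infinite_finite_induct) (simp_all add: poly_mod_add_left)

lemma coeff_xpoly:
  "coeff (xpoly s \<alpha>) n = (if n = s then 1 else 0) - (if n = 0 then \<alpha> else 0)"
  by (simp add: xpoly_def coeff_monom coeff_pCons split: nat.split)

definition reflect_cofactor :: "nat \<Rightarrow> 'a::field \<Rightarrow> 'a poly \<Rightarrow> 'a poly" where
  "reflect_cofactor s \<alpha> p = reflect_poly (xpoly s \<alpha> div p)"

context
  fixes s :: nat and \<alpha> :: "'a::field"
  assumes s_pos: "0 < s"
begin

lemma degree_xpoly: "degree (xpoly s \<alpha>) = s"
proof (rule antisym)
  show "degree (xpoly s \<alpha>) \<le> s"
    unfolding xpoly_def by (intro degree_diff_le) (auto simp: degree_monom_le)
  show "s \<le> degree (xpoly s \<alpha>)"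
    using s_pos by (intro le_degree) (simp add: coeff_xpoly)
qed

lemma xpoly_nonzero: "xpoly s \<alpha> \<noteq> 0"
  using degree_xpoly s_pos by auto

lemma degree_mod_xpoly_less: "degree (f mod xpoly s \<alpha>) < s"
  using degree_mod_less[OF xpoly_nonzero, of f] degree_xpoly s_pos by auto

lemma mod_xpoly_eq_self_iff: "f mod xpoly s \<alpha> = f \<longleftrightarrow> degree f < s"
  using degree_mod_xpoly_less[of f] mod_poly_less[of f "xpoly s \<alpha>"] degree_xpoly by metis

lemma monom_mod_xpoly: "monom c n mod xpoly s \<alpha> = monom (\<alpha> ^ (n div s) * c) (n mod s)"
proof -
  have const_power: "[:\<alpha>:] ^ k = [:\<alpha> ^ k:]" for k
    by (induction k) (simp_all add: mult.commute)
  have "monom 1 s = xpoly s \<alpha> + [:\<alpha>:]" by (simp add: xpoly_def)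
  then have "monom 1 s mod xpoly s \<alpha> = [:\<alpha>:] mod xpoly s \<alpha>" by simp
  then have "monom 1 s ^ (n div s) mod xpoly s \<alpha> = [:\<alpha> ^ (n div s):] mod xpoly s \<alpha>"
    by (metis power_mod const_power)
  moreover have "monom c n = smult c (monom 1 s ^ (n div s) * monom 1 (n mod s))"
  proof -
    have "n = s * (n div s) + n mod s" by simp
    then show ?thesis by (metis monom_power mult_monom power_one smult_monom mult.right_neutral)
  qed
  ultimately have "monom c n mod xpoly s \<alpha> = smult c ([:\<alpha> ^ (n div s):] * monom 1 (n mod s)) mod xpoly s \<alpha>"
    by (metis mod_smult_left mod_mult_left_eq)
  also have "smult c ([:\<alpha> ^ (n div s):] * monom 1 (n mod s)) = monom (\<alpha> ^ (n div s) * c) (n mod s)"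
    by (simp add: smult_monom mult.commute)
  also have "\<dots> mod xpoly s \<alpha> = monom (\<alpha> ^ (n div s) * c) (n mod s)"
    using s_pos by (simp add: mod_xpoly_eq_self_iff le_less_trans[OF degree_monom_le])
  finally show ?thesis .
qed

lemma coeff_top_mod_xpoly:
  assumes "degree F \<le> 2 * s - 2"
  shows "coeff (F mod xpoly s \<alpha>) (s - 1) = coeff F (s - 1)"
proof -
  define Q where "Q = F div xpoly s \<alpha>"
  have F: "F = xpoly s \<alpha> * Q + F mod xpoly s \<alpha>" by (simp add: Q_def)
  have "coeff (xpoly s \<alpha> * Q) (s - 1) = 0"
  proof (cases "Q = 0")
    case False
    have "xpoly s \<alpha> * Q = F - F mod xpoly s \<alpha>" using F by (simp add: algebra_simps)
    also have "degree \<dots> \<le> 2 * s - 2"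
      using assms degree_mod_xpoly_less[of F] by (intro degree_diff_le) auto
    finally have "s + degree Q \<le> 2 * s - 2"
      using degree_mult_eq[OF xpoly_nonzero False] degree_xpoly by simp
    then have "degree Q < s - 1" using s_pos by linarith
    moreover have "xpoly s \<alpha> * Q = monom 1 s * Q - smult \<alpha> Q"
      by (simp add: xpoly_def algebra_simps)
    ultimately show ?thesis by (simp add: coeff_monom_mult coeff_eq_0)
  qed simp
  then show ?thesis by (subst (2) F) simp
qed

lemma degree_le_if_dvd_xpoly: "q dvd xpoly s \<alpha> \<Longrightarrow> degree q \<le> s"
  using dvd_imp_degree_le[OF _ xpoly_nonzero] by (simp add: degree_xpoly)

lemma coeff_0_neq_0_if_dvd_xpoly:
  assumes "\<alpha> \<noteq> 0" and "q dvd xpoly s \<alpha>"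
  shows "coeff q 0 \<noteq> 0"
proof -
  obtain u where "xpoly s \<alpha> = q * u" using assms(2) by (auto elim: dvdE)
  then have "coeff q 0 * coeff u 0 = coeff (xpoly s \<alpha>) 0" by (simp add: coeff_mult_0)
  also have "\<dots> = - \<alpha>" using s_pos by (simp add: coeff_xpoly)
  finally show ?thesis using assms(1) by auto
qed

context
  assumes \<alpha>: "\<alpha> \<in> {1, -1}"
begin

lemma reflect_xpoly: "reflect_poly (xpoly s \<alpha>) = smult (- \<alpha>) (xpoly s \<alpha>)"
  using \<alpha> s_pos by (intro poly_eqI) (auto simp: coeff_reflect_poly degree_xpoly coeff_xpoly)

lemma reflect_dvd_xpoly:
  assumes "q dvd xpoly s \<alpha>"
  shows "reflect_poly q dvd xpoly s \<alpha>"
proof -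
  obtain u where "xpoly s \<alpha> = q * u" using assms by (auto elim: dvdE)
  then have "smult (- \<alpha>) (xpoly s \<alpha>) = reflect_poly q * reflect_poly u"
    by (metis reflect_xpoly reflect_poly_mult)
  then have "reflect_poly q dvd smult (- \<alpha>) (xpoly s \<alpha>)" by simp
  then show ?thesis using \<alpha> by (auto simp: dvd_smult_cancel)
qed

context
  fixes q :: "'a poly"
  assumes q_dvd: "q dvd xpoly s \<alpha>"
begin

lemma cofactor_dvd_xpoly: "xpoly s \<alpha> div q dvd xpoly s \<alpha>"
  using q_dvd by (metis dvd_mult_div_cancel dvd_triv_right)

lemma cofactor_nonzero: "xpoly s \<alpha> div q \<noteq> 0"
  using q_dvd xpoly_nonzero by (metis dvd_mult_div_cancel mult_zero_right)

lemma coeff_0_cofactor_nonzero: "coeff (xpoly s \<alpha> div q) 0 \<noteq> 0"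
  using \<alpha> cofactor_dvd_xpoly by (intro coeff_0_neq_0_if_dvd_xpoly) auto

lemma reflect_cofactor_dvd_xpoly: "reflect_cofactor s \<alpha> q dvd xpoly s \<alpha>"
  unfolding reflect_cofactor_def using cofactor_dvd_xpoly by (rule reflect_dvd_xpoly)

lemma reflect_cofactor_nonzero: "reflect_cofactor s \<alpha> q \<noteq> 0"
  using cofactor_nonzero by (simp add: reflect_cofactor_def)

lemma degree_reflect_cofactor: "degree (reflect_cofactor s \<alpha> q) = s - degree q"
proof -
  have "q \<noteq> 0" using q_dvd xpoly_nonzero by auto
  then have "s = degree q + degree (xpoly s \<alpha> div q)"
    using q_dvd cofactor_nonzero degree_xpoly by (metis degree_mult_eq dvd_mult_div_cancel)
  then show ?thesis using coeff_0_cofactor_nonzero by (simp add: reflect_cofactor_def)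
qed

end

end

end

section \<open>Principal ideals of \<open>F[x]/(x\<^sup>s - \<alpha>)\<close> and their orthogonal complements\<close>

definition mod_ideal :: "'a::field poly \<Rightarrow> 'a poly \<Rightarrow> 'a poly set" where
  "mod_ideal X p = {(g * p) mod X | g. True}"

lemma mem_mod_ideal_iff:
  assumes "p dvd X"
  shows "f \<in> mod_ideal X p \<longleftrightarrow> f mod X = f \<and> p dvd f"
proof
  assume "f \<in> mod_ideal X p"
  then obtain g where "f = (g * p) mod X" by (auto simp: mod_ideal_def)
  then show "f mod X = f \<and> p dvd f" using assms by (simp add: dvd_mod)
next
  assume "f mod X = f \<and> p dvd f"
  then obtain g where "f = (g * p) mod X" by (metis dvdE mult.commute)
  then show "f \<in> mod_ideal X p" by (auto simp: mod_ideal_def)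
qed

lemma mod_mem_mod_ideal_iff:
  assumes "p dvd X"
  shows "f mod X \<in> mod_ideal X p \<longleftrightarrow> p dvd f"
  using assms by (simp only: mem_mod_ideal_iff mod_mod_trivial dvd_mod_iff simp_thms)

lemma dvd_if_mod_eq_mult_mod:
  fixes q :: "'a::field poly"
  assumes "q dvd X" and "f mod X = (t * q) mod X"
  shows "q dvd f"
  using assms mod_mem_mod_ideal_iff[OF assms(1), of f] by (auto simp: mod_ideal_def)

lemma mod_ideal_subset:
  assumes "p dvd X" and "q dvd X" and "q dvd p"
  shows "mod_ideal X p \<subseteq> mod_ideal X q"
  using assms dvd_trans by (auto simp: mem_mod_ideal_iff[OF assms(1)] mem_mod_ideal_iff[OF assms(2)])

lemma mod_ideal_eq_iff:
  assumes "p dvd X" and "q dvd X"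
  shows "mod_ideal X p = mod_ideal X q \<longleftrightarrow> p dvd q \<and> q dvd p"
proof
  have "b dvd a" if "a dvd X" "b dvd X" "mod_ideal X a = mod_ideal X b" for a b
  proof -
    have "a mod X \<in> mod_ideal X a" using mod_mem_mod_ideal_iff[OF that(1)] by simp
    then show ?thesis using that(3) mod_mem_mod_ideal_iff[OF that(2)] by simp
  qed
  then show "mod_ideal X p = mod_ideal X q \<Longrightarrow> p dvd q \<and> q dvd p" using assms by metis
qed (use assms mod_ideal_subset in blast)

definition coeff_inner :: "nat \<Rightarrow> 'a::comm_ring_1 poly \<Rightarrow> 'a poly \<Rightarrow> 'a" where
  "coeff_inner s f w = (\<Sum>i<s. coeff f i * coeff w i)"

definition orth_compl :: "nat \<Rightarrow> 'a::comm_ring_1 poly set \<Rightarrow> 'a poly set" where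
  "orth_compl s S = {w. degree w < s \<and> (\<forall>f\<in>S. coeff_inner s f w = 0)}"

definition reverse_coeffs :: "nat \<Rightarrow> 'a::comm_monoid_add poly \<Rightarrow> 'a poly" where
  "reverse_coeffs s w = (\<Sum>i<s. monom (coeff w i) (s - 1 - i))"

context
  fixes s :: nat and \<alpha> :: "'a::field"
  assumes s_pos: "0 < s"
begin

lemma coeff_reverse_coeffs:
  "coeff (reverse_coeffs s w) n = (if n < s then coeff w (s - 1 - n) else (0::'a))"
proof -
  have "coeff (reverse_coeffs s w) n = (\<Sum>i<s. if i = s - 1 - n \<and> n < s then coeff w i else 0)"
    unfolding reverse_coeffs_def coeff_sum coeff_monom by (intro sum.cong) auto
  then show ?thesis using s_pos by simp
qed

lemma degree_reverse_coeffs: "degree (reverse_coeffs s (w :: 'a poly)) < s"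
  using s_pos by (intro degree_lessI) (auto simp: coeff_reverse_coeffs)

lemma reverse_coeffs_eq_monom_mult_reflect:
  assumes "degree (w :: 'a poly) < s"
  shows "reverse_coeffs s w = monom 1 (s - 1 - degree w) * reflect_poly w"
  using assms by (intro poly_eqI)
    (auto simp: coeff_reverse_coeffs coeff_monom_mult coeff_reflect_poly intro: coeff_eq_0)

lemma dvd_reverse_coeffs_iff:
  fixes q w :: "'a poly"
  assumes "coeff q 0 \<noteq> 0" and "degree w < s"
  shows "q dvd reverse_coeffs s w \<longleftrightarrow> reflect_poly q dvd w"
proof
  assume "q dvd reverse_coeffs s w"
  then obtain z where z: "reverse_coeffs s w = q * z" by (auto elim: dvdE)
  have "w = reverse_coeffs s (reverse_coeffs s w)"
    using assms(2) by (intro poly_eqI) (auto simp: coeff_reverse_coeffs intro: coeff_eq_0)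
  also have "\<dots> = monom 1 (s - 1 - degree (reverse_coeffs s w)) * reflect_poly (reverse_coeffs s w)"
    by (rule reverse_coeffs_eq_monom_mult_reflect[OF degree_reverse_coeffs])
  also have "\<dots> = reflect_poly q * (monom 1 (s - 1 - degree (reverse_coeffs s w)) * reflect_poly z)"
    by (simp add: z reflect_poly_mult ac_simps)
  finally show "reflect_poly q dvd w" by (metis dvd_triv_left)
next
  assume "reflect_poly q dvd w"
  then obtain z where "w = reflect_poly q * z" by (auto elim: dvdE)
  then have "reverse_coeffs s w = q * (monom 1 (s - 1 - degree w) * reflect_poly z)"
    using assms by (simp add: reverse_coeffs_eq_monom_mult_reflect reflect_poly_mult ac_simps)
  then show "q dvd reverse_coeffs s w" by simp
qed

lemma coeff_inner_eq_coeff_mod_xpoly: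
  fixes f w :: "'a poly"
  assumes "degree f < s" and "degree w < s"
  shows "coeff_inner s f w = coeff ((f * reverse_coeffs s w) mod xpoly s \<alpha>) (s - 1)"
proof -
  have "degree (f * reverse_coeffs s w) \<le> 2 * s - 2"
    using degree_mult_le[of f "reverse_coeffs s w"] assms(1) degree_reverse_coeffs[of w] by linarith
  then have "coeff ((f * reverse_coeffs s w) mod xpoly s \<alpha>) (s - 1) = coeff (f * reverse_coeffs s w) (s - 1)"
    by (rule coeff_top_mod_xpoly[OF s_pos])
  also have "\<dots> = (\<Sum>i\<le>s - 1. coeff f i * coeff (reverse_coeffs s w) (s - 1 - i))"
    by (rule coeff_mult)
  also have "\<dots> = coeff_inner s f w"
    unfolding coeff_inner_def using s_pos by (intro sum.cong) (auto simp: coeff_reverse_coeffs)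
  finally show ?thesis ..
qed

lemma eq_0_if_top_coeffs_of_shifts_vanish:
  fixes u :: "'a poly"
  assumes "degree u < s" and "\<And>j. j < s \<Longrightarrow> coeff ((monom 1 j * u) mod xpoly s \<alpha>) (s - 1) = 0"
  shows "u = 0"
proof -
  have "coeff u n = 0" for n
  proof (cases "n < s")
    case True
    have "coeff u n = coeff (monom 1 (s - 1 - n) * u) (s - 1)"
      using True by (simp add: coeff_monom_mult)
    also have "\<dots> = coeff ((monom 1 (s - 1 - n) * u) mod xpoly s \<alpha>) (s - 1)"
      using assms(1) degree_mult_le[of "monom 1 (s - 1 - n)" u] degree_monom_le[of "1::'a" "s - 1 - n"]
      by (intro coeff_top_mod_xpoly[OF s_pos, symmetric]) linarith
    also have "\<dots> = 0" using assms(2) True by simp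
    finally show ?thesis .
  qed (use assms(1) in \<open>simp add: coeff_eq_0\<close>)
  then show ?thesis by (simp add: poly_eq_iff)
qed

text \<open>The ideal is closed under multiplication by \<open>x\<close>, so pairing \<open>w\<close> with \<open>x\<^sup>j p\<close> for all
  \<open>j < s\<close> reads off every coefficient of \<open>p \<cdot> reverse_coeffs s w\<close> modulo \<open>x\<^sup>s - \<alpha>\<close>.\<close>

lemma annihilates_mod_ideal_iff:
  fixes p w :: "'a poly"
  assumes "p dvd xpoly s \<alpha>" and "degree w < s"
  shows "(\<forall>f\<in>mod_ideal (xpoly s \<alpha>) p. coeff_inner s f w = 0) \<longleftrightarrow>
    xpoly s \<alpha> dvd p * reverse_coeffs s w"
proof
  assume orth: "\<forall>f\<in>mod_ideal (xpoly s \<alpha>) p. coeff_inner s f w = 0"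
  have "(p * reverse_coeffs s w) mod xpoly s \<alpha> = 0"
  proof (rule eq_0_if_top_coeffs_of_shifts_vanish)
    show "degree ((p * reverse_coeffs s w) mod xpoly s \<alpha>) < s"
      by (rule degree_mod_xpoly_less[OF s_pos])
    fix j assume "j < s"
    define f where "f = (monom 1 j * p) mod xpoly s \<alpha>"
    have "coeff ((monom 1 j * ((p * reverse_coeffs s w) mod xpoly s \<alpha>)) mod xpoly s \<alpha>) (s - 1) =
        coeff ((f * reverse_coeffs s w) mod xpoly s \<alpha>) (s - 1)"
      by (simp add: f_def mod_mult_left_eq mod_mult_right_eq mult.assoc)
    also have "\<dots> = coeff_inner s f w"
      using assms(2) by (simp add: f_def coeff_inner_eq_coeff_mod_xpoly degree_mod_xpoly_less[OF s_pos])
    also have "\<dots> = 0" using orth by (auto simp: f_def mod_ideal_def)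
    finally show "coeff ((monom 1 j * ((p * reverse_coeffs s w) mod xpoly s \<alpha>)) mod xpoly s \<alpha>) (s - 1) = 0" .
  qed
  then show "xpoly s \<alpha> dvd p * reverse_coeffs s w" by (simp add: mod_eq_0_iff_dvd)
next
  assume dvd: "xpoly s \<alpha> dvd p * reverse_coeffs s w"
  show "\<forall>f\<in>mod_ideal (xpoly s \<alpha>) p. coeff_inner s f w = 0"
  proof
    fix f assume "f \<in> mod_ideal (xpoly s \<alpha>) p"
    then obtain a where f: "f = p * a" and "degree f < s"
      using mem_mod_ideal_iff[OF assms(1)] mod_xpoly_eq_self_iff[OF s_pos] by (metis dvdE)
    then have "coeff_inner s f w = coeff ((a * (p * reverse_coeffs s w)) mod xpoly s \<alpha>) (s - 1)"
      using assms(2) by (simp add: coeff_inner_eq_coeff_mod_xpoly ac_simps)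
    then show "coeff_inner s f w = 0" using dvd by simp
  qed
qed

lemma orth_compl_mod_ideal:
  fixes p :: "'a poly"
  assumes \<alpha>: "\<alpha> \<in> {1, -1}" and p_dvd: "p dvd xpoly s \<alpha>"
  shows "orth_compl s (mod_ideal (xpoly s \<alpha>) p) = mod_ideal (xpoly s \<alpha>) (reflect_cofactor s \<alpha> p)"
proof (intro set_eqI)
  fix w
  have "p \<noteq> 0" using p_dvd xpoly_nonzero[OF s_pos, of \<alpha>] by auto
  have "w \<in> orth_compl s (mod_ideal (xpoly s \<alpha>) p) \<longleftrightarrow>
      degree w < s \<and> p * (xpoly s \<alpha> div p) dvd p * reverse_coeffs s w"
    using annihilates_mod_ideal_iff[OF p_dvd] p_dvd by (auto simp: orth_compl_def)
  also have "\<dots> \<longleftrightarrow> degree w < s \<and> reflect_cofactor s \<alpha> p dvd w"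
    using \<open>p \<noteq> 0\<close> coeff_0_cofactor_nonzero[OF s_pos \<alpha> p_dvd]
    by (auto simp: dvd_reverse_coeffs_iff reflect_cofactor_def)
  also have "\<dots> \<longleftrightarrow> w \<in> mod_ideal (xpoly s \<alpha>) (reflect_cofactor s \<alpha> p)"
    using reflect_cofactor_dvd_xpoly[OF s_pos \<alpha> p_dvd]
    by (simp add: mem_mod_ideal_iff mod_xpoly_eq_self_iff[OF s_pos])
  finally show "w \<in> orth_compl s (mod_ideal (xpoly s \<alpha>) p) \<longleftrightarrow>
      w \<in> mod_ideal (xpoly s \<alpha>) (reflect_cofactor s \<alpha> p)" .
qed

end

section \<open>The Lagrange basis at distinct roots of \<open>y\<^sup>l - \<beta>\<close>\<close>

definition lagrange_basis :: "(nat \<Rightarrow> 'a::field) \<Rightarrow> nat \<Rightarrow> nat \<Rightarrow> 'a poly" where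
  "lagrange_basis \<theta> l k = (\<Prod>j\<in>{0..<l} - {k}. smult (inverse (\<theta> k - \<theta> j)) [:- \<theta> j, 1:])"

lemma eta_eq_lagrange_basis: "eta \<omega> r l k = lagrange_basis (\<lambda>j. \<omega> ^ (1 + j * r)) l k"
  by (simp add: eta_def lagrange_basis_def)

lemma coeff_geometric: "coeff (\<Sum>j<l. monom (c ^ j) j) n = (if n < l then c ^ n else 0)"
  by (simp add: coeff_sum coeff_monom)

lemma degree_geometric: "0 < l \<Longrightarrow> degree (\<Sum>j<l. monom (c ^ j) j) < l"
  by (intro degree_lessI) (simp_all add: coeff_geometric)

context
  fixes l :: nat and \<theta> :: "nat \<Rightarrow> 'a::field"
  assumes inj_\<theta>: "inj_on \<theta> {..<l}"
begin

lemma poly_lagrange_basis: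
  assumes "k < l" and "n < l"
  shows "poly (lagrange_basis \<theta> l k) (\<theta> n) = (if n = k then 1 else 0)"
proof -
  have "poly (lagrange_basis \<theta> l k) (\<theta> n) = (\<Prod>j\<in>{0..<l} - {k}. inverse (\<theta> k - \<theta> j) * (\<theta> n - \<theta> j))"
    by (simp add: lagrange_basis_def poly_prod algebra_simps)
  also have "\<dots> = (if n = k then 1 else 0)"
  proof (cases "n = k")
    case True
    have "\<theta> k \<noteq> \<theta> j" if "j \<in> {0..<l} - {k}" for j
      using that assms(1) inj_\<theta> by (auto simp: inj_on_def)
    then show ?thesis using True by (intro trans[OF prod.neutral]) auto
  next
    case False
    then have "n \<in> {0..<l} - {k}" using assms(2) by simp
    then show ?thesis using False by (auto intro: prod_zero)
  qed
  finally show ?thesis .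
qed

lemma degree_lagrange_basis:
  assumes "k < l"
  shows "degree (lagrange_basis \<theta> l k) < l"
proof -
  have "degree (lagrange_basis \<theta> l k) \<le> (\<Sum>j\<in>{0..<l} - {k}. 1)"
    unfolding lagrange_basis_def
  proof (rule order.trans[OF degree_prod_sum_le], simp, rule sum_mono)
    fix j
    show "(degree \<circ> (\<lambda>j. smult (inverse (\<theta> k - \<theta> j)) [:- \<theta> j, 1:])) j \<le> 1"
      using degree_smult_le[of "inverse (\<theta> k - \<theta> j)" "[:- \<theta> j, 1:]"] by simp
  qed
  also have "\<dots> < l" using assms by simp
  finally show ?thesis .
qed

lemma poly_eq_if_agree_on_nodes:
  assumes "degree g < l" and "degree h < l" and "\<And>n. n < l \<Longrightarrow> poly g (\<theta> n) = poly h (\<theta> n)"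
  shows "g = h"
proof (rule poly_eqI_degree[of "\<theta> ` {..<l}"])
  show "card (\<theta> ` {..<l}) > degree g" "card (\<theta> ` {..<l}) > degree h"
    using assms(1,2) inj_\<theta> by (simp_all add: card_image)
qed (use assms(3) in auto)

context
  fixes \<beta> :: 'a
  assumes \<beta>_nonzero: "\<beta> \<noteq> 0" and \<theta>_pow: "\<And>k. k < l \<Longrightarrow> \<theta> k ^ l = \<beta>"
begin

lemma poly_geometric_at_nodes:
  assumes "k < l" and "n < l"
  shows "poly (\<Sum>j<l. monom (inverse (\<theta> k) ^ j) j) (\<theta> n) = (if n = k then of_nat l else 0)"
proof -
  define z where "z = \<theta> n / \<theta> k"
  have nonzero: "\<theta> k \<noteq> 0" "\<theta> n \<noteq> 0"
    using assms \<theta>_pow \<beta>_nonzero by (metis zero_power zero_less_iff_neq_zero less_nat_zero_code)+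
  have "poly (\<Sum>j<l. monom (inverse (\<theta> k) ^ j) j) (\<theta> n) = (\<Sum>j<l. z ^ j)"
    by (simp add: poly_sum poly_monom z_def power_divide field_simps)
  also have "\<dots> = (if n = k then of_nat l else 0)"
  proof (cases "n = k")
    case False
    then have "z \<noteq> 1" using inj_\<theta> assms nonzero by (auto simp: z_def inj_on_def)
    moreover have "z ^ l = 1" using \<theta>_pow assms \<beta>_nonzero by (simp add: z_def power_divide)
    ultimately show ?thesis using False by (simp add: geometric_sum)
  qed (simp add: z_def nonzero)
  finally show ?thesis .
qed

text \<open>The characteristic does not divide \<open>l\<close>: otherwise \<open>\<Sum>j<l. (y / \<theta> 0)\<^sup>j\<close>, which is
  nonzero of degree below \<open>l\<close>, would vanish at all \<open>l\<close> nodes.\<close>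

lemma of_nat_nonzero_if_nodes:
  assumes "0 < l"
  shows "(of_nat l :: 'a) \<noteq> 0"
proof
  assume l_zero: "(of_nat l :: 'a) = 0"
  have "(\<Sum>j<l. monom (inverse (\<theta> 0) ^ j) j) = 0"
  proof (rule poly_eq_if_agree_on_nodes)
    show "degree (\<Sum>j<l. monom (inverse (\<theta> 0) ^ j) j) < l" by (rule degree_geometric[OF assms])
    show "degree (0 :: 'a poly) < l" using assms by simp
    show "poly (\<Sum>j<l. monom (inverse (\<theta> 0) ^ j) j) (\<theta> n) = poly 0 (\<theta> n)" if "n < l" for n
      using poly_geometric_at_nodes[OF assms that] l_zero by simp
  qed
  then have "coeff (\<Sum>j<l. monom (inverse (\<theta> 0) ^ j) j) 0 = 0" by simp
  then show False using assms by (simp add: coeff_geometric)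
qed

lemma coeff_lagrange_basis:
  assumes "k < l" and "j < l"
  shows "coeff (lagrange_basis \<theta> l k) j = inverse (\<theta> k) ^ j / of_nat l"
proof -
  have "(\<Sum>j<l. monom (inverse (\<theta> k) ^ j) j) = smult (of_nat l) (lagrange_basis \<theta> l k)"
  proof (rule poly_eq_if_agree_on_nodes)
    show "degree (\<Sum>j<l. monom (inverse (\<theta> k) ^ j) j) < l"
      using assms(1) by (intro degree_geometric) simp
    show "degree (smult (of_nat l) (lagrange_basis \<theta> l k)) < l"
      using degree_smult_le degree_lagrange_basis[OF assms(1)] by (rule le_less_trans)
    show "poly (\<Sum>j<l. monom (inverse (\<theta> k) ^ j) j) (\<theta> n) =
        poly (smult (of_nat l) (lagrange_basis \<theta> l k)) (\<theta> n)" if "n < l" for n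
      using poly_geometric_at_nodes[OF assms(1) that] poly_lagrange_basis[OF assms(1) that] by simp
  qed
  then have "coeff (\<Sum>j<l. monom (inverse (\<theta> k) ^ j) j) j = of_nat l * coeff (lagrange_basis \<theta> l k) j"
    by simp
  then have "inverse (\<theta> k) ^ j = of_nat l * coeff (lagrange_basis \<theta> l k) j"
    using assms(2) by (simp only: coeff_geometric if_True)
  moreover have "(of_nat l :: 'a) \<noteq> 0" using assms by (intro of_nat_nonzero_if_nodes) simp
  ultimately show ?thesis by (simp add: eq_divide_eq mult.commute)
qed

end

end

section \<open>Substituting a value for \<open>y\<close>\<close>

definition eval_y :: "nat \<Rightarrow> nat \<Rightarrow> (nat \<Rightarrow> nat \<Rightarrow> 'a::comm_ring_1) \<Rightarrow> 'a \<Rightarrow> 'a poly" where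
  "eval_y s l c \<theta> = (\<Sum>i<s. \<Sum>j<l. monom (c i j * \<theta> ^ j) i)"

lemma coeff_eval_y: "coeff (eval_y s l c \<theta>) n = (if n < s then \<Sum>j<l. c n j * \<theta> ^ j else 0)"
proof -
  have "coeff (eval_y s l c \<theta>) n = (\<Sum>i<s. if i = n then \<Sum>j<l. c i j * \<theta> ^ j else 0)"
    unfolding eval_y_def coeff_sum coeff_monom by (intro sum.cong) auto
  then show ?thesis by simp
qed

lemma degree_eval_y: "0 < s \<Longrightarrow> degree (eval_y s l c \<theta>) < s"
  by (intro degree_lessI) (simp_all add: coeff_eval_y)

lemma eval_y_sum: "eval_y s l (\<lambda>i j. \<Sum>k\<in>K. F k i j) \<theta> = (\<Sum>k\<in>K. eval_y s l (F k) \<theta>)"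
  by (rule poly_eqI) (simp add: coeff_eval_y coeff_sum sum_distrib_right sum.swap[of _ K])

lemma eval_y_single:
  assumes "i0 < s" and "j0 < l"
  shows "eval_y s l (\<lambda>i j. if i0 = i \<and> j0 = j then w else 0) \<theta> = monom (w * \<theta> ^ j0) i0"
proof (rule poly_eqI)
  fix n
  have "(\<Sum>j<l. (if j0 = j then w else 0) * \<theta> ^ j) = (\<Sum>j<l. if j0 = j then w * \<theta> ^ j0 else 0)"
    by (rule sum.cong) auto
  then show "coeff (eval_y s l (\<lambda>i j. if i0 = i \<and> j0 = j then w else 0) \<theta>) n =
      coeff (monom (w * \<theta> ^ j0) i0) n"
    using assms by (simp add: coeff_eval_y coeff_monom)
qed

lemma eval_y_prodR:
  assumes "degree f < s" and "degree g < l"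
  shows "eval_y s l (prodR s l f g) \<theta> = smult (poly g \<theta>) f"
proof (rule poly_eqI)
  fix n
  have "poly g \<theta> = (\<Sum>i\<le>degree g. coeff g i * \<theta> ^ i)" by (rule poly_altdef)
  also have "\<dots> = (\<Sum>j<l. coeff g j * \<theta> ^ j)"
    by (rule sum.mono_neutral_left) (use assms(2) in \<open>auto simp: coeff_eq_0\<close>)
  finally show "coeff (eval_y s l (prodR s l f g) \<theta>) n = coeff (smult (poly g \<theta>) f) n"
    using assms(1) by (simp add: coeff_eval_y prodR_def sum_distrib_left coeff_eq_0 ac_simps)
qed

lemma rmul_eq_sum:
  assumes "0 < s" and "0 < l"
  shows "rmul s l \<alpha> \<beta> a c = (\<lambda>i j. \<Sum>i1<s. \<Sum>j1<l. \<Sum>i2<s. \<Sum>j2<l.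
    if (i1 + i2) mod s = i \<and> (j1 + j2) mod l = j
    then \<alpha> ^ ((i1 + i2) div s) * \<beta> ^ ((j1 + j2) div l) * a i1 j1 * c i2 j2 else 0)"
  using assms by (auto simp: rmul_def fun_eq_iff intro!: sum.neutral)

lemma eval_y_rmul:
  fixes \<alpha> \<beta> \<theta> :: "'a::field"
  assumes "0 < s" and "0 < l" and "\<theta> ^ l = \<beta>"
  shows "eval_y s l (rmul s l \<alpha> \<beta> a c) \<theta> = (eval_y s l a \<theta> * eval_y s l c \<theta>) mod xpoly s \<alpha>"
proof -
  have \<theta>_pow: "\<beta> ^ (n div l) * \<theta> ^ (n mod l) = \<theta> ^ n" for n
    using assms(3) by (metis div_mult_mod_eq power_add power_mult mult.commute)
  have "eval_y s l (rmul s l \<alpha> \<beta> a c) \<theta> = (\<Sum>i1<s. \<Sum>j1<l. \<Sum>i2<s. \<Sum>j2<l.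
      monom (\<alpha> ^ ((i1 + i2) div s) * \<beta> ^ ((j1 + j2) div l) * a i1 j1 * c i2 j2 * \<theta> ^ ((j1 + j2) mod l))
        ((i1 + i2) mod s))"
    using assms(1,2) by (simp add: rmul_eq_sum eval_y_sum eval_y_single)
  also have "\<dots> = (\<Sum>i1<s. \<Sum>j1<l. \<Sum>i2<s. \<Sum>j2<l.
      monom (\<alpha> ^ ((i1 + i2) div s) * (a i1 j1 * c i2 j2 * \<theta> ^ (j1 + j2))) ((i1 + i2) mod s))"
    by (simp add: \<theta>_pow[of "_ + _", symmetric] ac_simps)
  also have "\<dots> = (\<Sum>i1<s. \<Sum>j1<l. \<Sum>i2<s. \<Sum>j2<l.
      monom (a i1 j1 * \<theta> ^ j1) i1 * monom (c i2 j2 * \<theta> ^ j2) i2 mod xpoly s \<alpha>)"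
    using assms(1) by (simp add: monom_mod_xpoly mult_monom power_add ac_simps)
  also have "\<dots> = (eval_y s l a \<theta> * eval_y s l c \<theta>) mod xpoly s \<alpha>"
    by (simp only: eval_y_def sum_distrib_right) (simp only: sum_distrib_left sum_mod_poly)
  finally show ?thesis .
qed

section \<open>An ideal of \<open>R\<close> and its dual through their components\<close>

definition R_inner :: "nat \<Rightarrow> nat \<Rightarrow> (nat \<Rightarrow> nat \<Rightarrow> 'a::comm_ring_1) \<Rightarrow> (nat \<Rightarrow> nat \<Rightarrow> 'a) \<Rightarrow> 'a" where
  "R_inner s l c v = (\<Sum>i<s. \<Sum>j<l. c i j * v i j)"

lemma R_dual_eq: "R_dual s l C = {v \<in> Rsp s l. \<forall>c\<in>C. R_inner s l c v = 0}"
  by (simp add: R_dual_def R_inner_def)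

lemma R_inner_sum: "R_inner s l (\<lambda>i j. \<Sum>k\<in>K. F k i j) v = (\<Sum>k\<in>K. R_inner s l (F k) v)"
  unfolding R_inner_def sum_distrib_right by (simp add: sum.swap[of _ K])

lemma prodR_in_Rsp: "prodR s l f g \<in> Rsp s l"
  by (simp add: prodR_def Rsp_def)

lemma sum_in_Rsp: "(\<And>k. k \<in> K \<Longrightarrow> F k \<in> Rsp s l) \<Longrightarrow> (\<lambda>i j. \<Sum>k\<in>K. F k i j) \<in> Rsp s l"
  by (simp add: Rsp_def)

lemma R_ideal_sum:
  assumes "R_ideal s l \<alpha> \<beta> C" and "\<And>k. k \<in> K \<Longrightarrow> F k \<in> C"
  shows "(\<lambda>i j. \<Sum>k\<in>K. F k i j) \<in> C"
  using assms(2)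
proof (induction K rule: infinite_finite_induct)
  case (insert k K)
  then show ?case using assms(1) unfolding R_ideal_def by simp
qed (use assms(1) in \<open>simp_all add: R_ideal_def\<close>)

definition component_ideal ::
    "nat \<Rightarrow> nat \<Rightarrow> (nat \<Rightarrow> 'a::field) \<Rightarrow> (nat \<Rightarrow> nat \<Rightarrow> 'a) set \<Rightarrow> nat \<Rightarrow> 'a poly set" where
  "component_ideal s l \<theta> C k = {f. degree f < s \<and> prodR s l f (lagrange_basis \<theta> l k) \<in> C}"

definition with_components ::
    "nat \<Rightarrow> nat \<Rightarrow> (nat \<Rightarrow> 'a::comm_ring_1) \<Rightarrow> (nat \<Rightarrow> 'a poly set) \<Rightarrow> (nat \<Rightarrow> nat \<Rightarrow> 'a) set" where
  "with_components s l \<theta> A = {c \<in> Rsp s l. \<forall>k<l. eval_y s l c (\<theta> k) \<in> A k}"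

locale crt_roots =
  fixes s l :: nat and \<beta> :: "'a::field" and \<theta> :: "nat \<Rightarrow> 'a"
  assumes s_pos: "0 < s" and l_pos: "0 < l" and \<beta>_nonzero: "\<beta> \<noteq> 0"
    and inj_\<theta>: "inj_on \<theta> {..<l}" and \<theta>_pow: "\<And>k. k < l \<Longrightarrow> \<theta> k ^ l = \<beta>"
begin

lemma eval_y_prodR_lagrange:
  assumes "degree f < s" and "k < l" and "n < l"
  shows "eval_y s l (prodR s l f (lagrange_basis \<theta> l k)) (\<theta> n) = (if n = k then f else 0)"
  using assms inj_\<theta> by (simp add: eval_y_prodR degree_lagrange_basis poly_lagrange_basis)

lemma Rsp_eqI:
  assumes "c \<in> Rsp s l" and "d \<in> Rsp s l" and "\<And>k. k < l \<Longrightarrow> eval_y s l c (\<theta> k) = eval_y s l d (\<theta> k)"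
  shows "c = d"
proof (intro ext)
  fix i j
  define row where "row e = (\<Sum>j<l. monom (e i j) j)" for e :: "nat \<Rightarrow> nat \<Rightarrow> 'a"
  have coeff_row: "coeff (row e) n = (if n < l then e i n else 0)" for e n
    by (simp add: row_def coeff_sum coeff_monom)
  have "row c = row d"
  proof (rule poly_eq_if_agree_on_nodes[OF inj_\<theta>])
    show "degree (row c) < l" "degree (row d) < l"
      using l_pos by (auto intro!: degree_lessI simp: coeff_row)
    show "poly (row c) (\<theta> n) = poly (row d) (\<theta> n)" if "n < l" for n
    proof (cases "i < s")
      case True
      then show ?thesis
        using arg_cong[OF assms(3)[OF that], of "\<lambda>p. coeff p i"]
        by (simp add: row_def poly_sum poly_monom coeff_eval_y)
    qed (use assms(1,2) in \<open>simp add: row_def Rsp_def\<close>)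
  qed
  then have "coeff (row c) j = coeff (row d) j" by simp
  then show "c i j = d i j"
    using assms(1,2) by (cases "j < l") (auto simp: coeff_row Rsp_def)
qed

lemma lagrange_decomposition:
  assumes "c \<in> Rsp s l"
  shows "c = (\<lambda>i j. \<Sum>k<l. prodR s l (eval_y s l c (\<theta> k)) (lagrange_basis \<theta> l k) i j)"
proof (rule Rsp_eqI[OF assms sum_in_Rsp[OF prodR_in_Rsp]])
  fix n assume "n < l"
  then show "eval_y s l c (\<theta> n) =
      eval_y s l (\<lambda>i j. \<Sum>k<l. prodR s l (eval_y s l c (\<theta> k)) (lagrange_basis \<theta> l k) i j) (\<theta> n)"
    by (simp add: eval_y_sum eval_y_prodR_lagrange degree_eval_y[OF s_pos])
qed

lemma R_inner_prodR_lagrange: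
  assumes "degree f < s" and "k < l"
  shows "R_inner s l (prodR s l f (lagrange_basis \<theta> l k)) v =
    coeff_inner s f (eval_y s l v (inverse (\<theta> k))) / of_nat l"
  using assms inj_\<theta> \<theta>_pow \<beta>_nonzero
  by (simp add: R_inner_def prodR_def coeff_lagrange_basis coeff_inner_def coeff_eval_y
      sum_divide_distrib sum_distrib_left ac_simps)

lemma with_components_subsetD:
  assumes "with_components s l \<theta> A \<subseteq> with_components s l \<theta> B" and "\<And>n. n < l \<Longrightarrow> 0 \<in> A n"
    and "k < l" and "f \<in> A k" and "degree f < s"
  shows "f \<in> B k"
proof -
  let ?c = "prodR s l f (lagrange_basis \<theta> l k)"
  have "?c \<in> with_components s l \<theta> A"
    using assms(2-5) by (simp add: with_components_def prodR_in_Rsp eval_y_prodR_lagrange)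
  then have "eval_y s l ?c (\<theta> k) \<in> B k" using assms(1,3) by (auto simp: with_components_def)
  then show ?thesis using assms(3,5) by (simp add: eval_y_prodR_lagrange)
qed

lemma with_components_eq_iff:
  assumes "\<And>k. k < l \<Longrightarrow> 0 \<in> A k \<and> 0 \<in> B k"
    and "\<And>k f. k < l \<Longrightarrow> f \<in> A k \<union> B k \<Longrightarrow> degree f < s"
  shows "with_components s l \<theta> A = with_components s l \<theta> B \<longleftrightarrow> (\<forall>k<l. A k = B k)"
proof
  assume eq: "with_components s l \<theta> A = with_components s l \<theta> B"
  show "\<forall>k<l. A k = B k"
  proof (intro allI impI equalityI subsetI)
    fix k f assume "k < l"
    show "f \<in> B k" if "f \<in> A k"
      by (rule with_components_subsetD[of A B]) (use assms eq \<open>k < l\<close> that in auto)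
    show "f \<in> A k" if "f \<in> B k"
      by (rule with_components_subsetD[of B A]) (use assms eq \<open>k < l\<close> that in auto)
  qed
qed (simp add: with_components_def)

context
  fixes \<alpha> :: 'a and C :: "(nat \<Rightarrow> nat \<Rightarrow> 'a) set"
  assumes ideal: "R_ideal s l \<alpha> \<beta> C"
begin

lemma zero_mem_component_ideal: "0 \<in> component_ideal s l \<theta> C k"
proof -
  have "prodR s l 0 (lagrange_basis \<theta> l k) = (\<lambda>i j. 0)" by (simp add: prodR_def fun_eq_iff)
  then show ?thesis using ideal s_pos by (simp add: component_ideal_def R_ideal_def)
qed

lemma prodR_eval_y_mem_ideal:
  assumes "c \<in> C" and "k < l"
  shows "prodR s l (eval_y s l c (\<theta> k)) (lagrange_basis \<theta> l k) \<in> C"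
proof -
  define e where "e = prodR s l 1 (lagrange_basis \<theta> l k)"
  have "rmul s l \<alpha> \<beta> e c \<in> C"
    using ideal assms(1) prodR_in_Rsp[of s l 1] unfolding R_ideal_def e_def by blast
  moreover have "rmul s l \<alpha> \<beta> e c = prodR s l (eval_y s l c (\<theta> k)) (lagrange_basis \<theta> l k)"
  proof (rule Rsp_eqI)
    show "rmul s l \<alpha> \<beta> e c \<in> Rsp s l" using \<open>rmul s l \<alpha> \<beta> e c \<in> C\<close> ideal by (auto simp: R_ideal_def)
    fix n assume "n < l"
    then show "eval_y s l (rmul s l \<alpha> \<beta> e c) (\<theta> n) =
        eval_y s l (prodR s l (eval_y s l c (\<theta> k)) (lagrange_basis \<theta> l k)) (\<theta> n)"
      using assms(2) s_pos l_pos \<theta>_pow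
      by (simp add: e_def eval_y_rmul eval_y_prodR_lagrange mod_xpoly_eq_self_iff degree_eval_y)
  qed (rule prodR_in_Rsp)
  ultimately show ?thesis by simp
qed

lemma ideal_eq_with_components: "C = with_components s l \<theta> (component_ideal s l \<theta> C)"
proof (intro set_eqI iffI)
  fix c assume "c \<in> C"
  then show "c \<in> with_components s l \<theta> (component_ideal s l \<theta> C)"
    using ideal prodR_eval_y_mem_ideal degree_eval_y[OF s_pos]
    by (auto simp: with_components_def component_ideal_def R_ideal_def)
next
  fix c assume c: "c \<in> with_components s l \<theta> (component_ideal s l \<theta> C)"
  then have "(\<lambda>i j. \<Sum>k<l. prodR s l (eval_y s l c (\<theta> k)) (lagrange_basis \<theta> l k) i j) \<in> C"
    by (intro R_ideal_sum[OF ideal]) (simp add: with_components_def component_ideal_def)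
  then show "c \<in> C" using c lagrange_decomposition by (auto simp: with_components_def)
qed

lemma dual_eq_with_components:
  "R_dual s l C = with_components s l (\<lambda>k. inverse (\<theta> k)) (\<lambda>k. orth_compl s (component_ideal s l \<theta> C k))"
proof (intro set_eqI iffI)
  fix v assume v: "v \<in> R_dual s l C"
  have "coeff_inner s f (eval_y s l v (inverse (\<theta> k))) = 0"
    if "k < l" and "f \<in> component_ideal s l \<theta> C k" for k f
    using v that of_nat_nonzero_if_nodes[OF inj_\<theta> \<beta>_nonzero \<theta>_pow l_pos]
    by (auto simp: R_dual_eq component_ideal_def R_inner_prodR_lagrange)
  then show "v \<in> with_components s l (\<lambda>k. inverse (\<theta> k)) (\<lambda>k. orth_compl s (component_ideal s l \<theta> C k))"
    using v by (simp add: with_components_def orth_compl_def R_dual_eq degree_eval_y[OF s_pos])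
next
  fix v assume v: "v \<in> with_components s l (\<lambda>k. inverse (\<theta> k)) (\<lambda>k. orth_compl s (component_ideal s l \<theta> C k))"
  have "R_inner s l c v = 0" if "c \<in> C" for c
  proof -
    have c: "c \<in> Rsp s l" "\<And>k. k < l \<Longrightarrow> eval_y s l c (\<theta> k) \<in> component_ideal s l \<theta> C k"
      using that ideal_eq_with_components by (auto simp: with_components_def)
    have "R_inner s l c v =
        (\<Sum>k<l. R_inner s l (prodR s l (eval_y s l c (\<theta> k)) (lagrange_basis \<theta> l k)) v)"
      by (subst lagrange_decomposition[OF c(1)]) (rule R_inner_sum)
    also have "\<dots> = 0"
      using v c(2) by (intro sum.neutral)
        (auto simp: R_inner_prodR_lagrange degree_eval_y[OF s_pos] orth_compl_def with_components_def)
    finally show ?thesis .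
  qed
  then show "v \<in> R_dual s l C" using v by (simp add: R_dual_eq with_components_def)
qed

lemma self_dual_iff_components:
  assumes \<sigma>: "\<And>k. k < l \<Longrightarrow> \<sigma> k < l \<and> \<sigma> (\<sigma> k) = k \<and> \<theta> k * \<theta> (\<sigma> k) = 1"
  shows "self_dual s l C \<longleftrightarrow>
    (\<forall>k<l. component_ideal s l \<theta> C k = orth_compl s (component_ideal s l \<theta> C (\<sigma> k)))"
proof -
  let ?I = "component_ideal s l \<theta> C"
  have "with_components s l (\<lambda>k. inverse (\<theta> k)) (\<lambda>k. orth_compl s (?I k)) =
      with_components s l \<theta> (\<lambda>k. orth_compl s (?I (\<sigma> k)))"
  proof -
    have inverse_\<theta>: "inverse (\<theta> k) = \<theta> (\<sigma> k)" if "k < l" for k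
      using \<sigma>[OF that] by (simp add: inverse_unique)
    have "(\<forall>k<l. eval_y s l v (inverse (\<theta> k)) \<in> orth_compl s (?I k)) \<longleftrightarrow>
        (\<forall>k<l. eval_y s l v (\<theta> k) \<in> orth_compl s (?I (\<sigma> k)))" for v
      using \<sigma> inverse_\<theta> by metis
    then show ?thesis by (simp add: with_components_def)
  qed
  then have "self_dual s l C \<longleftrightarrow>
      with_components s l \<theta> ?I = with_components s l \<theta> (\<lambda>k. orth_compl s (?I (\<sigma> k)))"
    using ideal_eq_with_components dual_eq_with_components by (simp add: self_dual_def)
  also have "\<dots> \<longleftrightarrow> (\<forall>k<l. ?I k = orth_compl s (?I (\<sigma> k)))"
    using zero_mem_component_ideal s_pos
    by (intro with_components_eq_iff) (auto simp: component_ideal_def orth_compl_def coeff_inner_def)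
  finally show ?thesis .
qed

end

end

section \<open>Associated generators\<close>

lemma mutual_dvd_obtains_constant_factor:
  fixes p q :: "'a::field poly"
  assumes "p dvd q" and "q dvd p" and "q \<noteq> 0"
  obtains t where "q = t * p" and "t \<noteq> 0" and "degree t = 0"
proof -
  obtain t where q: "q = p * t" using assms(1) by (auto elim: dvdE)
  then have "p \<noteq> 0" "t \<noteq> 0" using assms(3) by auto
  then have "degree q = degree p + degree t" by (simp add: q degree_mult_eq)
  moreover have "degree q \<le> degree p" using assms(2) \<open>p \<noteq> 0\<close> by (rule dvd_imp_degree_le)
  ultimately have "degree t = 0" by simp
  with q \<open>t \<noteq> 0\<close> show ?thesis by (intro that) (simp_all add: mult.commute)
qed

lemma sum_involution_complement:
  fixes d :: "nat \<Rightarrow> nat"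
  assumes "\<And>k. k < l \<Longrightarrow> \<sigma> k < l \<and> \<sigma> (\<sigma> k) = k" and "\<And>k. k < l \<Longrightarrow> d k + d (\<sigma> k) = s"
  shows "s * l = 2 * (\<Sum>k<l. d k)"
proof -
  have "(\<Sum>k<l. d (\<sigma> k)) = (\<Sum>k<l. d k)"
    by (rule sum.reindex_bij_witness[of _ \<sigma> \<sigma>]) (use assms(1) in auto)
  then have "2 * (\<Sum>k<l. d k) = (\<Sum>k<l. d k + d (\<sigma> k))" by (simp add: sum.distrib)
  also have "\<dots> = s * l" using assms(2) by simp
  finally show ?thesis by simp
qed

context
  fixes s :: nat and \<alpha> :: "'a::field" and l :: nat and p :: "nat \<Rightarrow> 'a poly" and \<sigma> :: "nat \<Rightarrow> nat"
  assumes s_pos: "0 < s" and \<alpha>: "\<alpha> \<in> {1, -1}"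
    and p_dvd: "\<And>j. j < l \<Longrightarrow> p j dvd xpoly s \<alpha>"
    and \<sigma>: "\<And>k. k < l \<Longrightarrow> \<sigma> k < l \<and> \<sigma> (\<sigma> k) = k"
begin

abbreviation (input) associated_generators :: bool where
  "associated_generators \<equiv>
    \<forall>k<l. p k dvd reflect_cofactor s \<alpha> (p (\<sigma> k)) \<and> reflect_cofactor s \<alpha> (p (\<sigma> k)) dvd p k"

lemma degree_sum_if_associated:
  assumes associated_generators
  shows "s * l = 2 * (\<Sum>j<l. degree (p j))"
proof (rule sum_involution_complement[OF \<sigma>])
  fix k assume "k < l"
  then have "\<sigma> k < l" using \<sigma> by blast
  have "p k \<noteq> 0" using p_dvd[OF \<open>k < l\<close>] xpoly_nonzero[OF s_pos, of \<alpha>] by auto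
  then have "degree (p k) = degree (reflect_cofactor s \<alpha> (p (\<sigma> k)))"
    using assms \<open>k < l\<close> reflect_cofactor_nonzero[OF s_pos \<alpha> p_dvd[OF \<open>\<sigma> k < l\<close>]]
    by (meson dvd_imp_degree_le le_antisym)
  also have "\<dots> = s - degree (p (\<sigma> k))"
    by (rule degree_reflect_cofactor[OF s_pos \<alpha> p_dvd[OF \<open>\<sigma> k < l\<close>]])
  finally show "degree (p k) + degree (p (\<sigma> k)) = s"
    using degree_le_if_dvd_xpoly[OF s_pos p_dvd[OF \<open>\<sigma> k < l\<close>]] by simp
qed

lemma constant_factors_if_associated:
  assumes associated_generators and k: "k < l"
  obtains t t' where "reflect_cofactor s \<alpha> (p k) = t * p (\<sigma> k)" and "t \<noteq> 0" and "degree t = 0"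
    and "p k = t' * reflect_cofactor s \<alpha> (p (\<sigma> k))" and "t' \<noteq> 0" and "degree t' = 0"
proof -
  have "p (\<sigma> k) dvd reflect_cofactor s \<alpha> (p k)" and "reflect_cofactor s \<alpha> (p k) dvd p (\<sigma> k)"
    using assms \<sigma>[OF k] by metis+
  then obtain t where "reflect_cofactor s \<alpha> (p k) = t * p (\<sigma> k)" "t \<noteq> 0" "degree t = 0"
    using reflect_cofactor_nonzero[OF s_pos \<alpha> p_dvd[OF k]] by (metis mutual_dvd_obtains_constant_factor)
  moreover obtain t' where "p k = t' * reflect_cofactor s \<alpha> (p (\<sigma> k))" "t' \<noteq> 0" "degree t' = 0"
    using p_dvd[OF k] xpoly_nonzero[OF s_pos, of \<alpha>] assms k
    by (metis mutual_dvd_obtains_constant_factor dvd_0_left)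
  ultimately show ?thesis by (rule that)
qed

lemma associated_iff_degree_sum_and_factors:
  "associated_generators \<longleftrightarrow>
    s * l = 2 * (\<Sum>j<l. degree (p j)) \<and>
    (\<forall>k<l. \<exists>t t'. t \<noteq> 0 \<and> degree t < s \<and> t' \<noteq> 0 \<and> degree t' < s \<and>
      reflect_cofactor s \<alpha> (p k) mod xpoly s \<alpha> = (t * p (\<sigma> k)) mod xpoly s \<alpha> \<and>
      p k mod xpoly s \<alpha> = (t' * reflect_cofactor s \<alpha> (p (\<sigma> k))) mod xpoly s \<alpha>)"
    (is "_ \<longleftrightarrow> ?degree_sum \<and> (\<forall>k<l. ?factors k)")
proof
  assume associated: associated_generators
  have "?factors k" if k: "k < l" for k
  proof -
    obtain t t' where "reflect_cofactor s \<alpha> (p k) = t * p (\<sigma> k)" "t \<noteq> 0" "degree t = 0"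
      and "p k = t' * reflect_cofactor s \<alpha> (p (\<sigma> k))" "t' \<noteq> 0" "degree t' = 0"
      using constant_factors_if_associated[OF associated k] .
    then show ?thesis using s_pos by (intro exI[of _ t] exI[of _ t']) simp
  qed
  then show "?degree_sum \<and> (\<forall>k<l. ?factors k)" using degree_sum_if_associated[OF associated] by blast
next
  assume "?degree_sum \<and> (\<forall>k<l. ?factors k)"
  then have "p (\<sigma> k) dvd reflect_cofactor s \<alpha> (p k) \<and> reflect_cofactor s \<alpha> (p (\<sigma> k)) dvd p k"
    if "k < l" for k
    using that p_dvd \<sigma> reflect_cofactor_dvd_xpoly[OF s_pos \<alpha> p_dvd] by (meson dvd_if_mod_eq_mult_mod)
  then show associated_generators using \<sigma> by metis
qed

end

lemma (in crt_roots) self_dual_iff_associated: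
  assumes ideal: "R_ideal s l \<alpha> \<beta> C" and \<alpha>: "\<alpha> \<in> {1, -1}"
    and \<sigma>: "\<And>k. k < l \<Longrightarrow> \<sigma> k < l \<and> \<sigma> (\<sigma> k) = k \<and> \<theta> k * \<theta> (\<sigma> k) = 1"
    and p_dvd: "\<And>j. j < l \<Longrightarrow> p j dvd xpoly s \<alpha>"
    and components: "\<And>k. k < l \<Longrightarrow> component_ideal s l \<theta> C k = mod_ideal (xpoly s \<alpha>) (p k)"
  shows "self_dual s l C \<longleftrightarrow>
    (\<forall>k<l. p k dvd reflect_cofactor s \<alpha> (p (\<sigma> k)) \<and> reflect_cofactor s \<alpha> (p (\<sigma> k)) dvd p k)"
proof -
  have "self_dual s l C \<longleftrightarrow>
      (\<forall>k<l. mod_ideal (xpoly s \<alpha>) (p k) = mod_ideal (xpoly s \<alpha>) (reflect_cofactor s \<alpha> (p (\<sigma> k))))"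
    using self_dual_iff_components[OF ideal \<sigma>] components \<sigma> orth_compl_mod_ideal[OF s_pos \<alpha> p_dvd]
    by auto
  also have "\<dots> \<longleftrightarrow>
      (\<forall>k<l. p k dvd reflect_cofactor s \<alpha> (p (\<sigma> k)) \<and> reflect_cofactor s \<alpha> (p (\<sigma> k)) dvd p k)"
    using \<sigma> p_dvd reflect_cofactor_dvd_xpoly[OF s_pos \<alpha> p_dvd] by (simp add: mod_ideal_eq_iff)
  finally show ?thesis .
qed

section \<open>The roots \<open>\<omega>\<^bsup>1+kr\<^esup>\<close> and the index involution\<close>

lemma order_of_sign:
  fixes \<beta> :: "'a::idom"
  assumes "\<beta> \<in> {1, -1}"
  shows "(LEAST n. 0 < n \<and> \<beta> ^ n = 1) = (if \<beta> = 1 then 1 else 2)"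
proof (cases "\<beta> = 1")
  case True
  then show ?thesis by (intro Least_equality) auto
next
  case False
  then have "\<beta> = -1" using assms by auto
  show ?thesis
  proof (rule Least_equality)
    show "0 < (if \<beta> = 1 then 1 else 2::nat) \<and> \<beta> ^ (if \<beta> = 1 then 1 else 2) = 1"
      using False \<open>\<beta> = -1\<close> by simp
    show "(if \<beta> = 1 then 1 else 2) \<le> n" if "0 < n \<and> \<beta> ^ n = 1" for n
      using that False by (cases "n = 1") auto
  qed
qed

lemma inj_on_affine_powers:
  fixes \<omega> :: "'a::field"
  assumes "0 < r" and "\<omega> \<noteq> 0" and "\<And>k. 0 < k \<Longrightarrow> k < r * l \<Longrightarrow> \<omega> ^ k \<noteq> 1"
  shows "inj_on (\<lambda>k. \<omega> ^ (c + k * r)) {..<l}"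
proof -
  have "\<omega> ^ (c + j * r) \<noteq> \<omega> ^ (c + k * r)" if "j < k" and "k < l" for j k
  proof
    assume eq: "\<omega> ^ (c + j * r) = \<omega> ^ (c + k * r)"
    have "c + k * r = (c + j * r) + (k - j) * r" using that by (simp add: algebra_simps)
    then have "\<omega> ^ ((k - j) * r) = 1" using eq assms(2) by (simp add: power_add)
    moreover have "0 < (k - j) * r" "(k - j) * r < r * l" using that assms(1) by auto
    ultimately show False using assms(3) by blast
  qed
  then show ?thesis by (intro inj_onI) (metis lessThan_iff linorder_neqE_nat)
qed

definition mirror_index :: "nat \<Rightarrow> nat \<Rightarrow> nat \<Rightarrow> nat" where
  "mirror_index L c k = nat ((int L - int c - int k) mod int L)"

lemma mirror_index_less: "0 < L \<Longrightarrow> mirror_index L c k < L"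
  by (simp add: mirror_index_def nat_less_iff)

lemma int_mirror_index: "0 < L \<Longrightarrow> int (mirror_index L c k) = (int L - int c - int k) mod int L"
  by (simp add: mirror_index_def)

lemma mirror_index_mirror_index: "k < L \<Longrightarrow> mirror_index L c (mirror_index L c k) = k"
proof -
  assume "k < L"
  then have "int (mirror_index L c (mirror_index L c k)) = (int L - int c - (int L - int c - int k)) mod int L"
    by (simp add: int_mirror_index mod_diff_right_eq)
  also have "\<dots> = int k" using \<open>k < L\<close> by simp
  finally show ?thesis by simp
qed

lemma dvd_add_mirror_index: "0 < L \<Longrightarrow> L dvd c + k + mirror_index L c k"
proof -
  assume "0 < L"
  then have "int (c + k + mirror_index L c k) mod int L = (int c + int k + (int L - int c - int k)) mod int L"
    by (simp add: int_mirror_index mod_add_right_eq)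
  then have "int L dvd int (c + k + mirror_index L c k)" by (simp add: mod_eq_0_iff_dvd)
  then show ?thesis by (simp only: int_dvd_int_iff)
qed

lemma root_parameters:
  fixes \<beta> \<omega> :: "'a::field"
  assumes l_pos: "0 < l" and \<beta>: "\<beta> \<in> {1, -1}" and r: "r = (LEAST n. 0 < n \<and> \<beta> ^ n = 1)"
    and \<omega>_order: "\<omega> ^ (r * l) = 1" and primitive: "\<forall>k. 0 < k \<and> k < r * l \<longrightarrow> \<omega> ^ k \<noteq> 1"
    and \<omega>_pow_l: "\<omega> ^ l = \<beta>"
  defines "\<theta> \<equiv> \<lambda>k. \<omega> ^ (1 + k * r)" and "\<sigma> \<equiv> mirror_index l (if \<beta> = 1 then 2 else 1)"
  shows "inj_on \<theta> {..<l}" and "\<And>k. \<theta> k ^ l = \<beta>"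
    and "\<And>k. k < l \<Longrightarrow> \<sigma> k < l \<and> \<sigma> (\<sigma> k) = k \<and> \<theta> k * \<theta> (\<sigma> k) = 1"
proof -
  define c :: nat where "c = (if \<beta> = 1 then 2 else 1)"
  have r_c: "r * c = 2" and "0 < r"
    using order_of_sign[OF \<beta>] by (simp_all add: r c_def)
  have "\<omega> \<noteq> 0" using \<omega>_order \<open>0 < r\<close> l_pos by (metis mult_pos_pos zero_power zero_neq_one)
  show "inj_on \<theta> {..<l}"
    unfolding \<theta>_def using \<open>0 < r\<close> \<open>\<omega> \<noteq> 0\<close> primitive by (intro inj_on_affine_powers) auto
  show \<theta>_pow: "\<theta> k ^ l = \<beta>" for k
  proof -
    have "(1 + k * r) * l = l + r * l * k" by (simp add: algebra_simps)
    then have "\<theta> k ^ l = \<omega> ^ (l + r * l * k)" by (metis \<theta>_def power_mult)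
    also have "\<dots> = \<omega> ^ l * (\<omega> ^ (r * l)) ^ k" by (simp only: power_add power_mult)
    finally show ?thesis using \<omega>_pow_l \<omega>_order by simp
  qed
  fix k assume "k < l"
  have "\<sigma> k < l" "\<sigma> (\<sigma> k) = k"
    using \<open>k < l\<close> l_pos by (simp_all add: \<sigma>_def mirror_index_less mirror_index_mirror_index)
  moreover have "\<theta> k * \<theta> (\<sigma> k) = 1"
  proof -
    have "l dvd c + k + \<sigma> k" unfolding \<sigma>_def c_def by (rule dvd_add_mirror_index[OF l_pos])
    then obtain q where q: "c + k + \<sigma> k = l * q" by (elim dvdE)
    have "\<theta> k * \<theta> (\<sigma> k) = \<omega> ^ (r * (c + k + \<sigma> k))"
      using r_c by (simp add: \<theta>_def algebra_simps flip: power_add)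
    also have "\<dots> = (\<omega> ^ (r * l)) ^ q" by (simp add: q power_mult mult.assoc)
    finally show ?thesis using \<omega>_order by simp
  qed
  ultimately show "\<sigma> k < l \<and> \<sigma> (\<sigma> k) = k \<and> \<theta> k * \<theta> (\<sigma> k) = 1" by blast
qed

theorem theorem4:
  fixes s l r :: nat and \<alpha> \<beta> \<omega> :: "'a::{finite,field}"
    and C :: "(nat \<Rightarrow> nat \<Rightarrow> 'a) set" and p :: "nat \<Rightarrow> 'a poly"
  assumes "0 < s" and "0 < l"
    and "\<alpha> \<in> {1, -1}" and "\<beta> \<in> {1, -1}"
    and "r = (LEAST n. 0 < n \<and> \<beta> ^ n = 1)"
    and "card (UNIV :: 'a set) mod (r * l) = 1 mod (r * l)"
    and "\<omega> ^ (r * l) = 1" and "\<forall>k. 0 < k \<and> k < r * l \<longrightarrow> \<omega> ^ k \<noteq> 1"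
    and "\<omega> ^ l = \<beta>"
    and "R_ideal s l \<alpha> \<beta> C"
    and "\<forall>j<l. lead_coeff (p j) = 1 \<and> p j dvd xpoly s \<alpha> \<and>
           Iset s l \<omega> r C j = {(g * p j) mod xpoly s \<alpha> | g. True}"
  shows "self_dual s l C \<longleftrightarrow>
    (s * l = 2 * (\<Sum>j<l. degree (p j)) \<and>
     (\<forall>k<l. \<exists>t t'. t \<noteq> 0 \<and> degree t < s \<and> t' \<noteq> 0 \<and> degree t' < s \<and>
        (let m = (if \<beta> = 1 then nat ((int l - 2 - int k) mod int l)
                  else nat ((int l - 1 - int k) mod int l))
         in reflect_poly (xpoly s \<alpha> div p k) mod xpoly s \<alpha> = (t * p m) mod xpoly s \<alpha>
          \<and> p k mod xpoly s \<alpha> = (t' * reflect_poly (xpoly s \<alpha> div p m)) mod xpoly s \<alpha>)))"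
proof -
  note s_pos = assms(1) and l_pos = assms(2) and \<alpha> = assms(3) and ideal = assms(10)
  \<comment> \<open>The hypothesis on the field size only guarantees that \<omega> exists.\<close>
  define \<theta> where "\<theta> = (\<lambda>k. \<omega> ^ (1 + k * r))"
  define \<sigma> where "\<sigma> = mirror_index l (if \<beta> = 1 then 2 else 1)"
  have \<sigma>: "\<And>k. k < l \<Longrightarrow> \<sigma> k < l \<and> \<sigma> (\<sigma> k) = k \<and> \<theta> k * \<theta> (\<sigma> k) = 1"
    and "inj_on \<theta> {..<l}" and "\<And>k. \<theta> k ^ l = \<beta>"
    using root_parameters[OF l_pos assms(4,5,7,8,9)] by (simp_all add: \<theta>_def \<sigma>_def)
  moreover have "\<beta> \<noteq> 0" using assms(4) by auto
  ultimately interpret crt_roots s l \<beta> \<theta> using s_pos l_pos by unfold_locales simp_all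
  have p_dvd: "\<And>j. j < l \<Longrightarrow> p j dvd xpoly s \<alpha>" using assms(11) by blast
  have components: "component_ideal s l \<theta> C k = mod_ideal (xpoly s \<alpha>) (p k)" if "k < l" for k
    using assms(11) that
    by (simp add: component_ideal_def Iset_def eta_eq_lagrange_basis \<theta>_def mod_ideal_def)
  have involution: "\<And>k. k < l \<Longrightarrow> \<sigma> k < l \<and> \<sigma> (\<sigma> k) = k" using \<sigma> by blast
  have "self_dual s l C \<longleftrightarrow>
      (\<forall>k<l. p k dvd reflect_cofactor s \<alpha> (p (\<sigma> k)) \<and> reflect_cofactor s \<alpha> (p (\<sigma> k)) dvd p k)"
    by (rule self_dual_iff_associated[OF ideal \<alpha> \<sigma> p_dvd components])
  also note associated_iff_degree_sum_and_factors[OF s_pos \<alpha> p_dvd involution]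
  finally show ?thesis by (simp add: \<sigma>_def mirror_index_def reflect_cofactor_def Let_def)
qed

end
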